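(* Let $k\ge 4$ and let $w$ be a minimal uncompletable word for $S_k$. Then $u=ba^{k-1}$ is a prefix of $w$ and $v=b^{k-1}a$ is a suffix of $w$.
   Context: $\Sigma=\{a,b\}$. $S_k=\left(\Sigma^k\setminus\{ba^{k-1},b^{k-1}a\}\right)\cup\left(\Sigma^{k-1}\setminus\{a^{k-1},b^{k-1}\}\right)$. $\mathit{Fact}(S^* )$ is the set of all factors of words in $S^*$. A word $w\in\Sigma^*\setminus\mathit{Fact}(S_k^* )$ is uncompletable for $S_k$; a minimal uncompletable word is an uncompletable word of minimal possible length (such words exist for $k\ge 4$ since $S_k$ is then not complete). *)

theory Defs
  imports Main
begin

datatype letter = a | b

definition S :: "nat \<Rightarrow> letter list set" where
  "S k = ({w. length w = k} - {b # replicate (k-1) a, replicate (k-1) b @ [a]})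
        \<union> ({w. length w = k - 1} - {replicate (k-1) a, replicate (k-1) b})"

definition star :: "'x list set \<Rightarrow> 'x list set" where
  "star L = {concat ws | ws. set ws \<subseteq> L}"

definition Fact :: "'x list set \<Rightarrow> 'x list set" where
  "Fact L = {w. \<exists>x y. x @ w @ y \<in> L}"

definition uncompletable :: "letter list set \<Rightarrow> letter list \<Rightarrow> bool" where
  "uncompletable L w \<longleftrightarrow> w \<notin> Fact (star L)"

definition minimal_uncompletable :: "letter list set \<Rightarrow> letter list \<Rightarrow> bool" where
  "minimal_uncompletable L w \<longleftrightarrow> uncompletable L w \<and>
     (\<forall>w'. uncompletable L w' \<longrightarrow> length w \<le> length w')"

end

theory Submission
  imports Defs
begin

text \<open>
  A word is a factor of some concatenation of words of S k iff it
  has a "bordered factorisation" p @ concat ss @ q with ss drawn from S k and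
  borders p, q of length at most k-1: every factor of a product of words of
  length at most k has this shape, and conversely any border can be padded to a
  word of S k (by a's on the left, b's on the right).
  Now let w = c # w1 be minimal uncompletable.  Then w1 has a bordered
  factorisation p @ concat ss @ q, and it cannot be extended to one of w; this
  forces |p| = k-1 and c # p to be one of the two excluded words of length k.
  The case c # p = b^{k-1} a is impossible since b^{k-2} a lies in S k, so
  w starts with b a^{k-1}.  The suffix statement follows by symmetry: the
  mirror map (reverse, then exchange a and b) preserves S k and exchanges the
  two excluded words, so it maps minimal uncompletable words to minimal
  uncompletable words.
\<close>

lemma concat_drop_prefix:
  assumes "x @ r = concat ws" and "\<forall>s\<in>set ws. length s \<le> k" and "0 < k"
  shows "\<exists>p ws'. r = p @ concat ws' \<and> set ws' \<subseteq> set ws \<and> length p < k"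
  using assms
proof (induction ws arbitrary: x)
  case Nil
  then show ?case by force
next
  case (Cons s ws)
  from Cons.prems(1) obtain us where
    "(x = s @ us \<and> us @ r = concat ws) \<or> (x @ us = s \<and> r = us @ concat ws)"
    by (auto simp: append_eq_append_conv2)
  then show ?case
  proof
    assume "x = s @ us \<and> us @ r = concat ws"
    then show ?case using Cons.IH[of us] Cons.prems by fastforce
  next
    assume split: "x @ us = s \<and> r = us @ concat ws"
    show ?case
    proof (cases "x = []")
      case True
      then show ?thesis using split Cons.prems(3)
        by (intro exI[of _ "[]"] exI[of _ "s # ws"]) auto
    next
      case False
      then have "length us < length s" using split by auto
      moreover have "length s \<le> k" using Cons.prems(2) by simp
      ultimately show ?thesis using split by (intro exI[of _ us] exI[of _ ws]) auto
    qed
  qed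
qed

lemma concat_drop_suffix:
  assumes "r @ y = concat ws" and "\<forall>s\<in>set ws. length s \<le> k" and "0 < k"
  shows "\<exists>ws' q. r = concat ws' @ q \<and> set ws' \<subseteq> set ws \<and> length q < k"
proof -
  have "rev y @ rev r = concat (map rev (rev ws))"
    using assms(1) by (metis rev_append rev_concat)
  moreover have "\<forall>s\<in>set (map rev (rev ws)). length s \<le> k" using assms(2) by auto
  ultimately obtain p ws' where
    cut: "rev r = p @ concat ws'" "set ws' \<subseteq> set (map rev (rev ws))" "length p < k"
    using concat_drop_prefix assms(3) by blast
  have "r = concat (map rev (rev ws')) @ rev p"
    using cut(1) by (metis rev_append rev_concat rev_rev_ident)
  moreover have "set (map rev (rev ws')) \<subseteq> set ws" using cut(2) by auto
  ultimately show ?thesis using cut(3) by (intro exI) auto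
qed

section \<open>Bordered factorisations\<close>

text \<open>w is a concatenation of words of S k, flanked by two borders that are
  short enough to be completed to words of S k.\<close>
definition bordered :: "nat \<Rightarrow> letter list \<Rightarrow> bool" where
  "bordered k w \<longleftrightarrow> (\<exists>p ss q. w = p @ concat ss @ q \<and> set ss \<subseteq> S k
                         \<and> length p \<le> k - 1 \<and> length q \<le> k - 1)"

lemma S_length: "s \<in> S k \<Longrightarrow> length s \<le> k"
  unfolding S_def by auto

lemma S_full_length:
  assumes "length s = k" "s \<noteq> b # replicate (k-1) a" "s \<noteq> replicate (k-1) b @ [a]"
  shows "s \<in> S k"
  using assms unfolding S_def by auto

text \<open>Both excluded words begin with b and end with a, so a word of length k
  that begins with a or ends with b lies in S k.\<close>
lemma S_full_length_hd_last:
  assumes "length s = k" and "k \<ge> 2" and "hd s = a \<or> last s = b"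
  shows "s \<in> S k"
proof -
  obtain m where m: "k = Suc (Suc m)" using assms(2) by (intro that[of "k - 2"]) simp
  have ends: "hd (b # replicate (k-1) a) = b" "last (b # replicate (k-1) a) = a"
    "hd (replicate (k-1) b @ [a]) = b" "last (replicate (k-1) b @ [a]) = a"
    by (simp_all add: m)
  show ?thesis
  proof (rule S_full_length[OF assms(1)])
    show "s \<noteq> b # replicate (k-1) a" using assms(3) ends by force
    show "s \<noteq> replicate (k-1) b @ [a]" using assms(3) ends by force
  qed
qed

lemma factor_bordered:
  assumes "0 < k" and "w \<in> Fact (star (S k))"
  shows "bordered k w"
proof -
  obtain x y ws where prod: "x @ w @ y = concat ws" and ws: "set ws \<subseteq> S k"
    using assms(2) unfolding Fact_def star_def by auto
  have short: "\<forall>s\<in>set ws. length s \<le> k" using ws S_length by auto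
  obtain p ws1 where left: "w @ y = p @ concat ws1" "set ws1 \<subseteq> set ws" "length p < k"
    using concat_drop_prefix[OF prod short assms(1)] by auto
  show ?thesis
  proof (cases "length w \<le> length p")
    case True
    then show ?thesis unfolding bordered_def using left(3)
      by (intro exI[of _ w] exI[of _ "[]"] exI[of _ "[]"]) auto
  next
    case False
    then obtain w' where w': "w = p @ w'" "w' @ y = concat ws1"
      using left(1) by (auto simp: append_eq_append_conv2)
    have "\<forall>s\<in>set ws1. length s \<le> k" using short left(2) by auto
    then obtain ss q where "w' = concat ss @ q" "set ss \<subseteq> set ws1" "length q < k"
      using concat_drop_suffix[OF w'(2)] assms(1) by blast
    then show ?thesis unfolding bordered_def using w' left ws
      by (intro exI[of _ p] exI[of _ ss] exI[of _ q]) auto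
  qed
qed

lemma bordered_factor:
  assumes "k \<ge> 2" and "bordered k w"
  shows "w \<in> Fact (star (S k))"
proof -
  obtain p ss q where w: "w = p @ concat ss @ q" "set ss \<subseteq> S k"
    and borders: "length p \<le> k - 1" "length q \<le> k - 1"
    using assms(2) unfolding bordered_def by auto
  define x where "x = a # replicate (k - 1 - length p) a"
  define y where "y = replicate (k - 1 - length q) b @ [b]"
  have "x @ p \<in> S k"
    using borders assms(1) by (intro S_full_length_hd_last) (auto simp: x_def)
  moreover have "q @ y \<in> S k"
    using borders assms(1) by (intro S_full_length_hd_last) (auto simp: y_def)
  ultimately have "set ([x @ p] @ ss @ [q @ y]) \<subseteq> S k" using w(2) by auto
  moreover have "x @ w @ y = concat ([x @ p] @ ss @ [q @ y])" using w(1) by simp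
  ultimately show ?thesis unfolding Fact_def star_def by blast
qed

lemma completable_iff_bordered:
  "k \<ge> 2 \<Longrightarrow> \<not> uncompletable (S k) w \<longleftrightarrow> bordered k w"
  unfolding uncompletable_def using factor_bordered bordered_factor by fastforce

section \<open>The mirror symmetry\<close>

fun swap_letter :: "letter \<Rightarrow> letter" where
  "swap_letter a = b" | "swap_letter b = a"

definition mirror :: "letter list \<Rightarrow> letter list" where
  "mirror w = map swap_letter (rev w)"

lemma swap_letter_involutive [simp]: "swap_letter (swap_letter c) = c"
  by (cases c) auto

lemma mirror_mirror [simp]: "mirror (mirror w) = w"
  by (simp add: mirror_def rev_map comp_def)

lemma length_mirror [simp]: "length (mirror w) = length w"
  by (simp add: mirror_def)

lemma mirror_append: "mirror (x @ y) = mirror y @ mirror x"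
  by (simp add: mirror_def)

lemma mirror_concat: "mirror (concat ws) = concat (rev (map mirror ws))"
  by (induction ws) (simp_all add: mirror_def)

lemma mirror_excluded: "mirror (b # replicate n a) = replicate n b @ [a]"
  by (simp add: mirror_def)

lemma mirror_excluded_inv: "mirror (replicate n b @ [a]) = b # replicate n a"
  by (metis mirror_excluded mirror_mirror)

lemma mirror_replicate: "mirror (replicate n c) = replicate n (swap_letter c)"
  by (simp add: mirror_def)

lemma S_mirror_closed:
  assumes "s \<in> S k"
  shows "mirror s \<in> S k"
proof -
  have inj: "mirror s = t \<longleftrightarrow> s = mirror t" for t by auto
  have "mirror s = b # replicate (k-1) a \<longleftrightarrow> s = replicate (k-1) b @ [a]"
    "mirror s = replicate (k-1) b @ [a] \<longleftrightarrow> s = b # replicate (k-1) a"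
    "mirror s = replicate (k-1) a \<longleftrightarrow> s = replicate (k-1) b"
    "mirror s = replicate (k-1) b \<longleftrightarrow> s = replicate (k-1) a"
    unfolding inj by (simp_all add: mirror_excluded mirror_excluded_inv mirror_replicate)
  then show ?thesis using assms unfolding S_def by auto
qed

lemma factor_mirror:
  assumes "\<And>s. s \<in> L \<Longrightarrow> mirror s \<in> L" and "w \<in> Fact (star L)"
  shows "mirror w \<in> Fact (star L)"
proof -
  obtain x y ws where "x @ w @ y = concat ws" "set ws \<subseteq> L"
    using assms(2) unfolding Fact_def star_def by auto
  then have "mirror y @ mirror w @ mirror x = concat (rev (map mirror ws))"
    and "set (rev (map mirror ws)) \<subseteq> L"
    using assms(1) by (auto simp: mirror_append[symmetric] mirror_concat[symmetric])
  then show ?thesis unfolding Fact_def star_def by blast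
qed

lemma minimal_uncompletable_mirror:
  assumes "minimal_uncompletable (S k) w"
  shows "minimal_uncompletable (S k) (mirror w)"
proof -
  have unc: "uncompletable (S k) v \<longleftrightarrow> uncompletable (S k) (mirror v)" for v
    unfolding uncompletable_def
    using factor_mirror[OF S_mirror_closed] by (metis mirror_mirror)
  show ?thesis using assms unfolding minimal_uncompletable_def
    by (metis unc length_mirror)
qed

text \<open>For k \<ge> 3 the word b^{k-2} a has length k-1 and contains both letters.\<close>
lemma S_short_mixed:
  assumes "k \<ge> 3"
  shows "replicate (k-2) b @ [a] \<in> S k"
proof -
  obtain m where k: "k = Suc (Suc (Suc m))"
    using assms by (intro that[of "k - 3"]) simp
  have "replicate (k-2) b @ [a] \<noteq> replicate (k-1) a" by (simp add: k)
  moreover have "last (replicate (k-2) b @ [a]) \<noteq> last (replicate (k-1) b)"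
    by (simp add: k)
  then have "replicate (k-2) b @ [a] \<noteq> replicate (k-1) b" by metis
  ultimately show ?thesis unfolding S_def by (simp add: k)
qed

lemma prefix_forced:
  assumes "k \<ge> 3" and "bordered k w1" and not_bordered: "\<not> bordered k (c # w1)"
  shows "\<exists>z. c # w1 = (b # replicate (k-1) a) @ z"
proof -
  obtain p ss q where w1: "w1 = p @ concat ss @ q" "set ss \<subseteq> S k"
    and borders: "length p \<le> k - 1" "length q \<le> k - 1"
    using assms(2) unfolding bordered_def by auto
  have extend: "c # w1 = p' @ concat ss' @ q \<Longrightarrow> set ss' \<subseteq> S k \<Longrightarrow> length p' \<le> k - 1
      \<Longrightarrow> False" for p' ss'
    using not_bordered borders(2) unfolding bordered_def by blast
  txt \<open>c # p is too long to serve as a border \<dots>\<close>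
  have "c # w1 = (c # p) @ concat ss @ q" using w1(1) by simp
  then have "\<not> length (c # p) \<le> k - 1"
    using extend w1(2) by blast
  then have len: "length (c # p) = k" using borders(1) assms(1) by simp
  txt \<open>\<dots> and cannot be a factor in S k, so it is an excluded word \<dots>\<close>
  have split: "c # w1 = [] @ concat ((c # p) # ss) @ q" using w1(1) by simp
  have "c # p \<notin> S k"
  proof
    assume "c # p \<in> S k"
    then have "set ((c # p) # ss) \<subseteq> S k" using w1(2) by simp
    then show False using extend[OF split] by simp
  qed
  txt \<open>\<dots> but not b^{k-1} a, which would split as the border b and b^{k-2} a.\<close>
  moreover have "c # p \<noteq> replicate (k-1) b @ [a]"
  proof
    assume eq: "c # p = replicate (k-1) b @ [a]"
    have "k - 1 = Suc (k - 2)" using assms(1) by simp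
    then have "c # p = b # (replicate (k-2) b @ [a])" using eq by simp
    then have "c = b" and p: "p = replicate (k-2) b @ [a]" by simp_all
    then have "c # w1 = [b] @ concat (p # ss) @ q" using w1(1) by simp
    moreover have "set (p # ss) \<subseteq> S k" using w1(2) S_short_mixed[OF assms(1)] p by simp
    moreover have "length [b] \<le> k - 1" using assms(1) by simp
    ultimately show False using extend by blast
  qed
  ultimately have "c # p = b # replicate (k-1) a"
    using S_full_length[OF len] by blast
  then show ?thesis using w1(1) by auto
qed

text \<open>Dropping the first letter of a minimal uncompletable word leaves a
  completable word, so the previous lemma applies.\<close>
lemma minimal_uncompletable_prefix:
  assumes "k \<ge> 3" and min: "minimal_uncompletable (S k) w"
  shows "\<exists>z. w = (b # replicate (k-1) a) @ z"
proof -
  have k: "k \<ge> 2" using assms(1) by simp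
  have not_bordered: "\<not> bordered k w"
    using min completable_iff_bordered[OF k] unfolding minimal_uncompletable_def by blast
  have "bordered k []" unfolding bordered_def by (intro exI[of _ "[]"]) simp
  then have "w \<noteq> []" using not_bordered by blast
  then obtain c w1 where w: "w = c # w1" by (cases w) auto
  have "\<not> uncompletable (S k) w1"
    using min w unfolding minimal_uncompletable_def by fastforce
  then have "bordered k w1" using completable_iff_bordered[OF k] by blast
  then show ?thesis using prefix_forced assms(1) not_bordered w by blast
qed

theorem theorem2:
  fixes k :: nat and w :: "letter list"
  assumes "k \<ge> 4" and "minimal_uncompletable (S k) w"
  shows "(\<exists>z. w = (b # replicate (k-1) a) @ z) \<and> (\<exists>z. w = z @ (replicate (k-1) b @ [a]))"
proof
  show "\<exists>z. w = (b # replicate (k-1) a) @ z"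
    using minimal_uncompletable_prefix assms by simp
  obtain z where "mirror w = (b # replicate (k-1) a) @ z"
    using minimal_uncompletable_prefix minimal_uncompletable_mirror assms by fastforce
  then have "w = mirror z @ mirror (b # replicate (k-1) a)"
    by (metis mirror_append mirror_mirror)
  then show "\<exists>z. w = z @ (replicate (k-1) b @ [a])"
    by (auto simp: mirror_excluded)
qed

end
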